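(* In the setting described in the context, for each $i\in[n]$, with probability at least $1-O(n^{-10})$: (1) $|(\nabla\mathcal L(\theta^* ))_i|\lesssim\sqrt{np\log n/L}$; (2) $\sum_{j\ne i}(\nabla^2\mathcal L(\theta^* ))_{i,j}^2\lesssim np(1+dp)$, $\sum_{s>n}(\nabla^2\mathcal L(\theta^* ))_{i,s}^2\lesssim ndp^2$, and $\sum_{j\in[n],j\ne i}|(\nabla^2\mathcal L(\theta^* ))_{i,j}|\lesssim np$; (3) $|y_{j,i}-\mathbb Ey_{j,i}|\lesssim\sqrt{\log n/L}$ for all $i\ne j$ with $(i,j)\in\mathcal E$.
   Context: Setting. Items $1,\dots,n$ have fixed covariates $x_1,\dots,x_n\in\mathbb R^d$, $d<n$, rescaled so $\|x_i\|_2\le\sqrt{(d+1)/n}$; $\tilde x_i=(e_i^\top,x_i^\top)^\top\in\mathbb R^{n+d}$, $e_i$ canonical in $\mathbb R^n$; $\theta=(\alpha^\top,\beta^\top)^\top$; true parameter $\theta^*$. Erdős–Rényi comparison graph $\mathcal G=([n],\mathcal E)$, edge probability $p$; for each edge and $l\in[L]$, independent $y^{(l)}_{j,i}\in\{0,1\}$ with $P(y^{(l)}_{j,i}=1)=\phi(\tilde x_i^\top\theta^*-\tilde x_j^\top\theta^* )$, $\phi(t)=e^t/(1+e^t)$, $y^{(l)}_{i,j}=1-y^{(l)}_{j,i}$, $y_{j,i}=L^{-1}\sum_ly^{(l)}_{j,i}$. $\mathcal L(\theta)=\sum_{(i,j)\in\mathcal E,i>j}\{-y_{j,i}(\tilde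 x_i^\top\theta-\tilde x_j^\top\theta)+\log(1+e^{\tilde x_i^\top\theta-\tilde x_j^\top\theta})\}$. Standing assumptions: $pn>c_p\log n$ for a constant $c_p>0$, $npL\gtrsim\log n$, $n$ large. $a\lesssim b$: $a\le Cb$ with $C$ an absolute constant independent of $n,p,L,d$. *)

theory Defs
  imports "HOL-Probability.Probability"
begin

text \<open>Items are indexed 0..n-1 (paper: 1..n). Parameter theta :: nat => real,
  theta k = alpha_k for k < n and theta (n+m) = beta_m for m < d.
  Covariate x i :: nat => real, with coordinates m < d.\<close>

definition logistic :: "real \<Rightarrow> real" where
  "logistic t = exp t / (1 + exp t)"

definition score :: "nat \<Rightarrow> nat \<Rightarrow> (nat \<Rightarrow> nat \<Rightarrow> real) \<Rightarrow> (nat \<Rightarrow> real) \<Rightarrow> nat \<Rightarrow> real" where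
  "score n d x \<theta> i = \<theta> i + (\<Sum>m<d. x i m * \<theta> (n + m))"

text \<open>Unordered pairs, stored as (i,j) with j < i < n.\<close>
definition pairs :: "nat \<Rightarrow> (nat \<times> nat) set" where
  "pairs n = {(i, j). j < i \<and> i < n}"

text \<open>Sample space: G (i,j) says whether the edge {i,j} (j<i) is in the
  Erdos-Renyi graph; Y ((i,j),l) is the l-th comparison outcome y^{(l)}_{j,i}
  (l < L) for the pair j<i.  Outcomes are drawn for every pair; only those on
  edges enter the loss.\<close>
type_synonym sample = "((nat \<times> nat) \<Rightarrow> bool) \<times> (((nat \<times> nat) \<times> nat) \<Rightarrow> bool)"

definition graph_pmf :: "nat \<Rightarrow> real \<Rightarrow> ((nat \<times> nat) \<Rightarrow> bool) pmf" where
  "graph_pmf n p = Pi_pmf (pairs n) False (\<lambda>_. bernoulli_pmf p)"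

definition outcome_pmf ::
  "nat \<Rightarrow> nat \<Rightarrow> nat \<Rightarrow> (nat \<Rightarrow> nat \<Rightarrow> real) \<Rightarrow> (nat \<Rightarrow> real) \<Rightarrow> (((nat \<times> nat) \<times> nat) \<Rightarrow> bool) pmf" where
  "outcome_pmf n d L x \<theta> = Pi_pmf (pairs n \<times> {..<L}) False
     (\<lambda>((i, j), l). bernoulli_pmf (logistic (score n d x \<theta> i - score n d x \<theta> j)))"

definition model_pmf :: "nat \<Rightarrow> nat \<Rightarrow> real \<Rightarrow> nat \<Rightarrow> (nat \<Rightarrow> nat \<Rightarrow> real) \<Rightarrow> (nat \<Rightarrow> real) \<Rightarrow> sample pmf" where
  "model_pmf n d p L x \<theta> = pair_pmf (graph_pmf n p) (outcome_pmf n d L x \<theta>)"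

definition edge :: "sample \<Rightarrow> nat \<Rightarrow> nat \<Rightarrow> bool" where
  "edge \<omega> i j = (i \<noteq> j \<and> (if j < i then fst \<omega> (i, j) else fst \<omega> (j, i)))"

text \<open>y_{j,i} = L^{-1} sum_l y^{(l)}_{j,i}; for i < j, y_{j,i} = 1 - y_{i,j}.\<close>
definition ybar :: "nat \<Rightarrow> sample \<Rightarrow> nat \<Rightarrow> nat \<Rightarrow> real" where
  "ybar L \<omega> j i = (if j < i then (\<Sum>l<L. of_bool (snd \<omega> ((i, j), l))) / real L
                    else 1 - (\<Sum>l<L. of_bool (snd \<omega> ((j, i), l))) / real L)"

definition loss :: "nat \<Rightarrow> nat \<Rightarrow> nat \<Rightarrow> (nat \<Rightarrow> nat \<Rightarrow> real) \<Rightarrow> sample \<Rightarrow> (nat \<Rightarrow> real) \<Rightarrow> real" where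
  "loss n d L x \<omega> \<theta> =
     (\<Sum>(i, j)\<in>{(i, j)\<in>pairs n. fst \<omega> (i, j)}.
        - ybar L \<omega> j i * (score n d x \<theta> i - score n d x \<theta> j)
        + ln (1 + exp (score n d x \<theta> i - score n d x \<theta> j)))"

definition pderiv_at :: "((nat \<Rightarrow> real) \<Rightarrow> real) \<Rightarrow> nat \<Rightarrow> (nat \<Rightarrow> real) \<Rightarrow> real" where
  "pderiv_at f k \<theta> = deriv (\<lambda>t. f (\<theta>(k := t))) (\<theta> k)"

definition grad_loss where
  "grad_loss n d L x \<omega> k \<theta> = pderiv_at (loss n d L x \<omega>) k \<theta>"

definition hess_loss where
  "hess_loss n d L x \<omega> k l \<theta> = pderiv_at (grad_loss n d L x \<omega> l) k \<theta>"

end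

theory Submission
  imports Defs
begin

text \<open>
  Outside three bad events all claims are deterministic. Each Hessian entry is a sum over the
  edges at item i of products of coordinates of the differences of extended covariates, weighted
  by logistic' \<le> 1/4; hence the three Hessian sums are bounded by multiples of the degree of i
  (by Cauchy-Schwarz for the covariate block), and a Chernoff bound keeps this degree below K n p
  except with probability n^-10. Given the graph, the i-th gradient coordinate is a weighted sum of
  independent centred Bernoulli outcomes whose squared weights add up to the degree, and every
  y_ji is an average of L such outcomes, so Hoeffding's inequality (with a union bound over the at
  most n^2 pairs for the y_ji) yields the remaining bounds.
\<close>

lemma logistic_nonneg: "0 \<le> logistic t"
  and logistic_le_one: "logistic t \<le> 1"
  unfolding logistic_def by (simp_all add: add_pos_pos)

definition logistic_deriv :: "real \<Rightarrow> real" where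
  "logistic_deriv t = exp t / (1 + exp t)\<^sup>2"

lemma logistic_deriv_nonneg: "0 \<le> logistic_deriv t"
  unfolding logistic_deriv_def by simp

lemma logistic_deriv_le_quarter: "logistic_deriv t \<le> 1/4"
proof -
  have "4 * exp t \<le> (1 + exp t)\<^sup>2"
    using zero_le_power2[of "1 - exp t"] by (simp add: power2_eq_square algebra_simps)
  then show ?thesis
    unfolding logistic_deriv_def by (simp add: divide_le_eq add_pos_pos)
qed

lemma has_real_derivative_logistic: "(logistic has_real_derivative logistic_deriv t) (at t)"
proof -
  have nz: "1 + exp t \<noteq> 0" using exp_gt_zero[of t] by linarith
  show ?thesis
    unfolding logistic_def[abs_def]
    by (rule derivative_eq_intros refl nz)+ (simp add: logistic_deriv_def field_simps power2_eq_square)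
qed

section \<open>Gradient and Hessian of the loss\<close>

text \<open>
  The k-th coordinate of the extended covariate (e_i, x_i) of item i, i.e. the derivative of
  score i in theta k; edge_coeff gives the coordinates of the difference for a pair (i, j).
\<close>

definition score_coeff :: "nat \<Rightarrow> nat \<Rightarrow> (nat \<Rightarrow> nat \<Rightarrow> real) \<Rightarrow> nat \<Rightarrow> nat \<Rightarrow> real" where
  "score_coeff n d x i k = of_bool (k = i) + (if n \<le> k \<and> k < n + d then x i (k - n) else 0)"

definition edge_coeff :: "nat \<Rightarrow> nat \<Rightarrow> (nat \<Rightarrow> nat \<Rightarrow> real) \<Rightarrow> nat \<times> nat \<Rightarrow> nat \<Rightarrow> real" where
  "edge_coeff n d x e k = score_coeff n d x (fst e) k - score_coeff n d x (snd e) k"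

definition score_gap :: "nat \<Rightarrow> nat \<Rightarrow> (nat \<Rightarrow> nat \<Rightarrow> real) \<Rightarrow> (nat \<Rightarrow> real) \<Rightarrow> nat \<times> nat \<Rightarrow> real" where
  "score_gap n d x \<theta> e = score n d x \<theta> (fst e) - score n d x \<theta> (snd e)"

definition edges :: "nat \<Rightarrow> (nat \<times> nat \<Rightarrow> bool) \<Rightarrow> (nat \<times> nat) set" where
  "edges n G = {e \<in> pairs n. G e}"

lemma score_fun_upd:
  assumes "i < n"
  shows "score n d x (\<theta>(k := t)) i = score n d x \<theta> i + score_coeff n d x i k * (t - \<theta> k)"
proof -
  have "(\<Sum>m<d. x i m * (\<theta>(k := t)) (n + m)) - (\<Sum>m<d. x i m * \<theta> (n + m))
      = (\<Sum>m<d. if m = k - n \<and> n \<le> k then x i m * (t - \<theta> k) else 0)"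
    unfolding sum_subtractf[symmetric] by (intro sum.cong) (auto simp: algebra_simps)
  also have "\<dots> = (if n \<le> k \<and> k < n + d then x i (k - n) else 0) * (t - \<theta> k)"
    by (cases "n \<le> k") auto
  finally show ?thesis
    using assms unfolding score_def score_coeff_def by (auto simp: algebra_simps)
qed

lemma finite_pairs: "finite (pairs n)"
  by (rule finite_subset[of _ "{..<n} \<times> {..<n}"]) (auto simp: pairs_def)

lemma card_pairs_le: "card (pairs n) \<le> n\<^sup>2"
proof -
  have "card (pairs n) \<le> card ({..<n} \<times> {..<n})"
    by (rule card_mono) (auto simp: pairs_def)
  then show ?thesis by (simp add: power2_eq_square)
qed

lemma edges_subset_pairs: "edges n G \<subseteq> pairs n"
  unfolding edges_def by blast

lemma finite_edges: "finite (edges n G)"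
  using finite_subset[OF edges_subset_pairs finite_pairs] .

lemma score_gap_fun_upd:
  assumes "e \<in> pairs n"
  shows "score_gap n d x (\<theta>(k := t)) e = score_gap n d x \<theta> e + edge_coeff n d x e k * (t - \<theta> k)"
  using assms unfolding score_gap_def edge_coeff_def pairs_def
  by (auto simp: score_fun_upd algebra_simps)

lemma pderiv_at_sum_score_gap:
  assumes "finite E" "E \<subseteq> pairs n"
    and deriv: "\<And>e s. e \<in> E \<Longrightarrow> (f e has_real_derivative f' e s) (at s)"
  shows "pderiv_at (\<lambda>\<theta>. \<Sum>e\<in>E. f e (score_gap n d x \<theta> e)) k \<theta>
       = (\<Sum>e\<in>E. edge_coeff n d x e k * f' e (score_gap n d x \<theta> e))"
proof -
  let ?g = "score_gap n d x \<theta>" and ?c = "\<lambda>e. edge_coeff n d x e k"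
  have upd: "(\<Sum>e\<in>E. f e (score_gap n d x (\<theta>(k := t)) e)) = (\<Sum>e\<in>E. f e (?g e + ?c e * (t - \<theta> k)))" for t
    using assms(2) by (intro sum.cong) (auto simp: score_gap_fun_upd)
  have "((\<lambda>t. \<Sum>e\<in>E. f e (?g e + ?c e * (t - \<theta> k))) has_real_derivative
      (\<Sum>e\<in>E. f' e (?g e) * ?c e)) (at (\<theta> k))"
  proof (rule DERIV_sum)
    fix e assume "e \<in> E"
    have "((\<lambda>t. ?g e + ?c e * (t - \<theta> k)) has_real_derivative ?c e) (at (\<theta> k))"
      by (rule derivative_eq_intros refl)+ simp
    from DERIV_chain2[OF deriv[OF \<open>e \<in> E\<close>] this]
    show "((\<lambda>t. f e (?g e + ?c e * (t - \<theta> k))) has_real_derivative f' e (?g e) * ?c e) (at (\<theta> k))"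
      by simp
  qed
  then show ?thesis
    unfolding pderiv_at_def upd by (simp add: DERIV_imp_deriv mult.commute)
qed

lemma loss_eq_sum_edges:
  "loss n d L x \<omega> \<theta> = (\<Sum>e\<in>edges n (fst \<omega>).
     - ybar L \<omega> (snd e) (fst e) * score_gap n d x \<theta> e + ln (1 + exp (score_gap n d x \<theta> e)))"
proof -
  have "{(i, j) \<in> pairs n. fst \<omega> (i, j)} = edges n (fst \<omega>)"
    unfolding edges_def by auto
  then show ?thesis
    unfolding loss_def score_gap_def case_prod_unfold by auto
qed

lemma grad_loss_eq:
  "grad_loss n d L x \<omega> k \<theta>
     = (\<Sum>e\<in>edges n (fst \<omega>). edge_coeff n d x e k * (logistic (score_gap n d x \<theta> e) - ybar L \<omega> (snd e) (fst e)))"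
  unfolding grad_loss_def loss_eq_sum_edges[abs_def]
  by (rule pderiv_at_sum_score_gap[OF finite_edges edges_subset_pairs,
        where f = "\<lambda>e s. - ybar L \<omega> (snd e) (fst e) * s + ln (1 + exp s)"])
     (auto intro!: derivative_eq_intros simp: logistic_def add_pos_pos)

lemma hess_loss_eq:
  "hess_loss n d L x \<omega> k l \<theta>
     = (\<Sum>e\<in>edges n (fst \<omega>). edge_coeff n d x e l * edge_coeff n d x e k * logistic_deriv (score_gap n d x \<theta> e))"
proof -
  have "pderiv_at (\<lambda>\<theta>. \<Sum>e\<in>edges n (fst \<omega>).
      edge_coeff n d x e l * (logistic (score_gap n d x \<theta> e) - ybar L \<omega> (snd e) (fst e))) k \<theta>
    = (\<Sum>e\<in>edges n (fst \<omega>). edge_coeff n d x e k * (edge_coeff n d x e l * logistic_deriv (score_gap n d x \<theta> e)))"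
    by (rule pderiv_at_sum_score_gap[OF finite_edges edges_subset_pairs,
          where f = "\<lambda>e s. edge_coeff n d x e l * (logistic s - ybar L \<omega> (snd e) (fst e))"])
       (auto intro!: derivative_eq_intros has_real_derivative_logistic)
  then show ?thesis
    unfolding hess_loss_def grad_loss_eq[abs_def] by (simp add: mult_ac)
qed

section \<open>Hessian bounds in terms of vertex degrees\<close>

definition graph_degree :: "nat \<Rightarrow> (nat \<times> nat \<Rightarrow> bool) \<Rightarrow> nat \<Rightarrow> real" where
  "graph_degree n G i = (\<Sum>e\<in>edges n G. of_bool (fst e = i \<or> snd e = i))"

lemma graph_degree_nonneg: "0 \<le> graph_degree n G i"
  unfolding graph_degree_def by (simp add: sum_nonneg)

lemma abs_edge_coeff_item:
  "e \<in> pairs n \<Longrightarrow> i < n \<Longrightarrow> \<bar>edge_coeff n d x e i\<bar> = of_bool (fst e = i \<or> snd e = i)"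
  by (cases e) (auto simp: edge_coeff_def score_coeff_def pairs_def)

lemma graph_degree_eq_sum_abs_edge_coeff:
  "i < n \<Longrightarrow> graph_degree n G i = (\<Sum>e\<in>edges n G. \<bar>edge_coeff n d x e i\<bar>)"
  unfolding graph_degree_def by (intro sum.cong refl) (simp add: abs_edge_coeff_item edges_def)

lemma graph_degree_eq_sum_sq_edge_coeff:
  assumes "i < n"
  shows "graph_degree n G i = (\<Sum>e\<in>edges n G. (edge_coeff n d x e i)\<^sup>2)"
  unfolding graph_degree_eq_sum_abs_edge_coeff[OF assms, of G d x]
proof (intro sum.cong refl)
  fix e assume "e \<in> edges n G"
  then have "\<bar>edge_coeff n d x e i\<bar> = of_bool (fst e = i \<or> snd e = i)"
    using assms by (simp add: abs_edge_coeff_item edges_def)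
  then show "\<bar>edge_coeff n d x e i\<bar> = (edge_coeff n d x e i)\<^sup>2"
    by (metis power2_abs of_bool_eq_0_iff of_bool_eq_1_iff power_one zero_power2)
qed

lemma abs_edge_coeff_items_mult_le:
  "e \<in> pairs n \<Longrightarrow> i < n \<Longrightarrow> j < n \<Longrightarrow> i \<noteq> j \<Longrightarrow>
   \<bar>edge_coeff n d x e j\<bar> * \<bar>edge_coeff n d x e i\<bar> \<le> of_bool (e = (max i j, min i j))"
  by (cases e) (auto simp: edge_coeff_def score_coeff_def pairs_def)

lemma edge_coeff_covariate:
  "e \<in> pairs n \<Longrightarrow> m < d \<Longrightarrow> edge_coeff n d x e (n + m) = x (fst e) m - x (snd e) m"
  by (cases e) (auto simp: edge_coeff_def score_coeff_def pairs_def)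

lemma abs_hess_loss_le:
  "\<bar>hess_loss n d L x \<omega> k l \<theta>\<bar>
     \<le> (\<Sum>e\<in>edges n (fst \<omega>). \<bar>edge_coeff n d x e l\<bar> * \<bar>edge_coeff n d x e k\<bar>) / 4"
  unfolding hess_loss_eq sum_divide_distrib
proof (rule order_trans[OF sum_abs sum_mono])
  fix e
  have "\<bar>edge_coeff n d x e l\<bar> * \<bar>edge_coeff n d x e k\<bar> * logistic_deriv (score_gap n d x \<theta> e)
      \<le> \<bar>edge_coeff n d x e l\<bar> * \<bar>edge_coeff n d x e k\<bar> * (1/4)"
    by (intro mult_left_mono logistic_deriv_le_quarter) simp
  then show "\<bar>edge_coeff n d x e l * edge_coeff n d x e k * logistic_deriv (score_gap n d x \<theta> e)\<bar>
      \<le> \<bar>edge_coeff n d x e l\<bar> * \<bar>edge_coeff n d x e k\<bar> / 4"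
    by (simp add: abs_mult logistic_deriv_nonneg)
qed

lemma sum_abs_hess_loss_items_le:
  assumes "i < n"
  shows "(\<Sum>j\<in>{..<n} - {i}. \<bar>hess_loss n d L x \<omega> i j \<theta>\<bar>) \<le> graph_degree n (fst \<omega>) i / 2"
proof -
  let ?E = "edges n (fst \<omega>)" and ?J = "{..<n} - {i}" and ?c = "edge_coeff n d x"
  have at_most_two: "(\<Sum>j\<in>?J. \<bar>?c e j\<bar>) \<le> 2" if "e \<in> ?E" for e
  proof -
    have e: "e \<in> pairs n" using that edges_subset_pairs by blast
    have "(\<Sum>j\<in>?J. \<bar>?c e j\<bar>) \<le> (\<Sum>j\<in>?J. of_bool (fst e = j)) + (\<Sum>j\<in>?J. of_bool (snd e = j))"
      unfolding sum.distrib[symmetric] by (intro sum_mono) (simp add: abs_edge_coeff_item[OF e])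
    also have "\<dots> \<le> 2"
      by (simp add: of_bool_def sum.If_cases)
    finally show ?thesis .
  qed
  have "(\<Sum>j\<in>?J. \<bar>hess_loss n d L x \<omega> i j \<theta>\<bar>) \<le> (\<Sum>j\<in>?J. \<Sum>e\<in>?E. \<bar>?c e j\<bar> * \<bar>?c e i\<bar> / 4)"
    by (intro sum_mono order_trans[OF abs_hess_loss_le]) (simp add: sum_divide_distrib)
  also have "\<dots> = (\<Sum>e\<in>?E. \<bar>?c e i\<bar> * (\<Sum>j\<in>?J. \<bar>?c e j\<bar>) / 4)"
    by (subst sum.swap) (simp add: sum_distrib_left sum_divide_distrib mult_ac)
  also have "\<dots> \<le> (\<Sum>e\<in>?E. \<bar>?c e i\<bar> * 2 / 4)"
    by (intro sum_mono divide_right_mono mult_left_mono at_most_two) auto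
  also have "\<dots> = graph_degree n (fst \<omega>) i / 2"
    unfolding graph_degree_def sum_divide_distrib using assms
    by (intro sum.cong refl) (auto simp: abs_edge_coeff_item edges_def)
  finally show ?thesis .
qed

lemma abs_hess_loss_items_le:
  assumes "i < n" "j < n" "i \<noteq> j"
  shows "\<bar>hess_loss n d L x \<omega> i j \<theta>\<bar> \<le> 1/4"
proof -
  have "\<bar>hess_loss n d L x \<omega> i j \<theta>\<bar> \<le> (\<Sum>e\<in>edges n (fst \<omega>). of_bool (e = (max i j, min i j))) / 4"
    using assms
    by (intro order_trans[OF abs_hess_loss_le] divide_right_mono sum_mono abs_edge_coeff_items_mult_le)
       (auto simp: edges_def)
  also have "\<dots> \<le> 1/4"
    using finite_edges by (simp add: of_bool_def sum.If_cases)
  finally show ?thesis .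
qed

lemma sum_sq_hess_loss_items_le:
  assumes "i < n"
  shows "(\<Sum>j\<in>{..<n} - {i}. (hess_loss n d L x \<omega> i j \<theta>)\<^sup>2) \<le> graph_degree n (fst \<omega>) i / 8"
proof -
  have "(\<Sum>j\<in>{..<n} - {i}. (hess_loss n d L x \<omega> i j \<theta>)\<^sup>2)
      \<le> (\<Sum>j\<in>{..<n} - {i}. \<bar>hess_loss n d L x \<omega> i j \<theta>\<bar> * (1/4))"
  proof (rule sum_mono)
    fix j assume "j \<in> {..<n} - {i}"
    then have "\<bar>hess_loss n d L x \<omega> i j \<theta>\<bar> \<le> 1/4"
      using assms by (intro abs_hess_loss_items_le) auto
    then have "\<bar>hess_loss n d L x \<omega> i j \<theta>\<bar> * \<bar>hess_loss n d L x \<omega> i j \<theta>\<bar>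
        \<le> \<bar>hess_loss n d L x \<omega> i j \<theta>\<bar> * (1/4)"
      by (intro mult_left_mono) auto
    then show "(hess_loss n d L x \<omega> i j \<theta>)\<^sup>2 \<le> \<bar>hess_loss n d L x \<omega> i j \<theta>\<bar> * (1/4)"
      by (simp add: power2_eq_square)
  qed
  also have "\<dots> = (\<Sum>j\<in>{..<n} - {i}. \<bar>hess_loss n d L x \<omega> i j \<theta>\<bar>) * (1/4)"
    by (rule sum_distrib_right[symmetric])
  also have "\<dots> \<le> graph_degree n (fst \<omega>) i / 2 * (1/4)"
    by (intro mult_right_mono sum_abs_hess_loss_items_le assms) simp
  finally show ?thesis by simp
qed

lemma sum_power2_diff_le:
  fixes u v :: "'a \<Rightarrow> real"
  shows "(\<Sum>m\<in>M. (u m - v m)\<^sup>2) \<le> 2 * (\<Sum>m\<in>M. (u m)\<^sup>2) + 2 * (\<Sum>m\<in>M. (v m)\<^sup>2)"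
proof -
  have "(u m - v m)\<^sup>2 \<le> 2 * (u m)\<^sup>2 + 2 * (v m)\<^sup>2" for m
    using zero_le_power2[of "u m + v m"] by (simp add: power2_eq_square algebra_simps)
  then show ?thesis
    by (simp add: sum_mono sum_distrib_left sum.distrib[symmetric])
qed

lemma sq_hess_loss_covariate_le:
  assumes "i < n" "m < d"
  shows "(hess_loss n d L x \<omega> i (n + m) \<theta>)\<^sup>2 \<le> graph_degree n (fst \<omega>) i / 16 *
    (\<Sum>e\<in>edges n (fst \<omega>). \<bar>edge_coeff n d x e i\<bar> * (x (fst e) m - x (snd e) m)\<^sup>2)"
proof -
  let ?E = "edges n (fst \<omega>)" and ?w = "\<lambda>e. \<bar>edge_coeff n d x e i\<bar>"
    and ?\<delta> = "\<lambda>e. x (fst e) m - x (snd e) m"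
  have "(\<Sum>e\<in>?E. \<bar>edge_coeff n d x e (n + m)\<bar> * ?w e) = (\<Sum>e\<in>?E. ?w e * (?w e * \<bar>?\<delta> e\<bar>))"
  proof (rule sum.cong[OF refl])
    fix e assume "e \<in> ?E"
    then have "e \<in> pairs n" by (simp add: edges_def)
    then show "\<bar>edge_coeff n d x e (n + m)\<bar> * ?w e = ?w e * (?w e * \<bar>?\<delta> e\<bar>)"
      using assms by (simp add: abs_edge_coeff_item edge_coeff_covariate)
  qed
  then have "\<bar>hess_loss n d L x \<omega> i (n + m) \<theta>\<bar> \<le> (\<Sum>e\<in>?E. ?w e * (?w e * \<bar>?\<delta> e\<bar>)) / 4"
    using abs_hess_loss_le[of n d L x \<omega> i "n + m" \<theta>] by simp
  then have "\<bar>hess_loss n d L x \<omega> i (n + m) \<theta>\<bar>\<^sup>2 \<le> ((\<Sum>e\<in>?E. ?w e * (?w e * \<bar>?\<delta> e\<bar>)) / 4)\<^sup>2"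
    by (rule power_mono) simp
  then have "(hess_loss n d L x \<omega> i (n + m) \<theta>)\<^sup>2 \<le> (\<Sum>e\<in>?E. ?w e * (?w e * \<bar>?\<delta> e\<bar>))\<^sup>2 / 16"
    by (simp add: power_divide)
  also have "\<dots> \<le> (\<Sum>e\<in>?E. (?w e)\<^sup>2) * (\<Sum>e\<in>?E. (?w e * \<bar>?\<delta> e\<bar>)\<^sup>2) / 16"
    by (intro divide_right_mono Cauchy_Schwarz_ineq_sum) simp
  also have "\<dots> = graph_degree n (fst \<omega>) i / 16 * (\<Sum>e\<in>?E. ?w e * (?\<delta> e)\<^sup>2)"
  proof -
    have w_sq: "(?w e)\<^sup>2 = ?w e" if "e \<in> ?E" for e
      using that assms by (simp add: abs_edge_coeff_item edges_def)
    have "(\<Sum>e\<in>?E. (?w e)\<^sup>2) = graph_degree n (fst \<omega>) i"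
      using assms w_sq by (simp add: graph_degree_eq_sum_abs_edge_coeff[symmetric])
    moreover have "(\<Sum>e\<in>?E. (?w e * \<bar>?\<delta> e\<bar>)\<^sup>2) = (\<Sum>e\<in>?E. ?w e * (?\<delta> e)\<^sup>2)"
      using w_sq by (intro sum.cong refl) (simp add: power_mult_distrib)
    ultimately show ?thesis by simp
  qed
  finally show ?thesis .
qed

lemma sum_sq_hess_loss_covariates_le:
  assumes i: "i < n" and x: "\<forall>a<n. (\<Sum>m<d. (x a m)\<^sup>2) \<le> (real d + 1) / real n"
  shows "(\<Sum>s\<in>{n..<n+d}. (hess_loss n d L x \<omega> i s \<theta>)\<^sup>2)
    \<le> (graph_degree n (fst \<omega>) i)\<^sup>2 * (real d + 1) / (4 * real n)"
proof -
  let ?E = "edges n (fst \<omega>)" and ?w = "\<lambda>e. \<bar>edge_coeff n d x e i\<bar>"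
    and ?\<delta> = "\<lambda>e m. x (fst e) m - x (snd e) m" and ?D = "graph_degree n (fst \<omega>) i"
  have \<delta>: "(\<Sum>m<d. (?\<delta> e m)\<^sup>2) \<le> 4 * ((real d + 1) / real n)" if "e \<in> ?E" for e
  proof -
    have "fst e < n" "snd e < n" using that by (auto simp: edges_def pairs_def)
    then show ?thesis
      using x[rule_format, of "fst e"] x[rule_format, of "snd e"]
        sum_power2_diff_le[of "x (fst e)" "x (snd e)" "{..<d}"] by linarith
  qed
  have "(\<Sum>s\<in>{n..<n+d}. (hess_loss n d L x \<omega> i s \<theta>)\<^sup>2) = (\<Sum>m<d. (hess_loss n d L x \<omega> i (n + m) \<theta>)\<^sup>2)"
    using sum.shift_bounds_nat_ivl[of _ 0 n d] by (simp add: lessThan_atLeast0 add.commute)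
  also have "\<dots> \<le> (\<Sum>m<d. ?D / 16 * (\<Sum>e\<in>?E. ?w e * (?\<delta> e m)\<^sup>2))"
    using i by (intro sum_mono sq_hess_loss_covariate_le) auto
  also have "\<dots> = ?D / 16 * (\<Sum>e\<in>?E. ?w e * (\<Sum>m<d. (?\<delta> e m)\<^sup>2))"
    unfolding sum_distrib_left by (rule sum.swap)
  also have "\<dots> \<le> ?D / 16 * (\<Sum>e\<in>?E. ?w e * (4 * ((real d + 1) / real n)))"
    using \<delta> graph_degree_nonneg by (intro mult_left_mono sum_mono) auto
  also have "\<dots> = ?D\<^sup>2 * (real d + 1) / (4 * real n)"
  proof -
    have "(\<Sum>e\<in>?E. ?w e * (4 * ((real d + 1) / real n))) = ?D * (4 * ((real d + 1) / real n))"
      using graph_degree_eq_sum_abs_edge_coeff[OF i, of "fst \<omega>" d x] by (simp only: sum_distrib_right)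
    then show ?thesis using i by (simp only:) (simp add: power2_eq_square field_simps)
  qed
  finally show ?thesis .
qed

lemma hess_loss_bounds:
  assumes i: "i < n" and x: "\<forall>a<n. (\<Sum>m<d. (x a m)\<^sup>2) \<le> (real d + 1) / real n"
    and deg: "graph_degree n (fst \<omega>) i < K * real n * p" and K: "1 \<le> K" and p: "0 < p" "p \<le> 1"
  shows "(\<Sum>j\<in>{..<n} - {i}. \<bar>hess_loss n d L x \<omega> i j \<theta>\<bar>) \<le> K\<^sup>2 * (real n * p)"
    and "(\<Sum>s\<in>{n..<n+d}. (hess_loss n d L x \<omega> i s \<theta>)\<^sup>2) \<le> K\<^sup>2 * (real n * real d * p\<^sup>2)"
    and "(\<Sum>j\<in>{..<n+d} - {i}. (hess_loss n d L x \<omega> i j \<theta>)\<^sup>2) \<le> K\<^sup>2 * (real n * p * (1 + real d * p))"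
proof -
  define D where "D = graph_degree n (fst \<omega>) i"
  have D: "0 \<le> D" "D < K * real n * p" using deg graph_degree_nonneg unfolding D_def by auto
  have n_pos: "real n > 0" using i by simp
  have Knp: "K * real n * p \<le> K\<^sup>2 * (real n * p)"
    using K p n_pos by (simp add: power2_eq_square mult_right_mono)
  have cov: "(\<Sum>s\<in>{n..<n+d}. (hess_loss n d L x \<omega> i s \<theta>)\<^sup>2) \<le> K\<^sup>2 * (real n * p\<^sup>2) * (real d + 1) / 4"
  proof -
    have "D\<^sup>2 \<le> (K * real n * p)\<^sup>2" using D by (intro power_mono) auto
    then have "D\<^sup>2 * (real d + 1) / (4 * real n) \<le> (K * real n * p)\<^sup>2 * (real d + 1) / (4 * real n)"
      by (intro divide_right_mono mult_right_mono) auto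
    also have "\<dots> = K\<^sup>2 * (real n * p\<^sup>2) * (real d + 1) / 4"
      using n_pos by (simp add: power2_eq_square field_simps)
    finally show ?thesis
      using sum_sq_hess_loss_covariates_le[OF i x, of L \<omega> \<theta>] unfolding D_def by linarith
  qed
  show "(\<Sum>j\<in>{..<n} - {i}. \<bar>hess_loss n d L x \<omega> i j \<theta>\<bar>) \<le> K\<^sup>2 * (real n * p)"
    using sum_abs_hess_loss_items_le[OF i, of d L x \<omega> \<theta>] D Knp unfolding D_def by linarith
  show "(\<Sum>s\<in>{n..<n+d}. (hess_loss n d L x \<omega> i s \<theta>)\<^sup>2) \<le> K\<^sup>2 * (real n * real d * p\<^sup>2)"
  proof (cases "d = 0")
    case False
    then have "K\<^sup>2 * (real n * p\<^sup>2) * (real d + 1) \<le> K\<^sup>2 * (real n * p\<^sup>2) * (4 * real d)"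
      by (intro mult_left_mono) auto
    then show ?thesis using cov by (simp add: mult_ac)
  qed simp
  have "(\<Sum>j\<in>{..<n+d} - {i}. (hess_loss n d L x \<omega> i j \<theta>)\<^sup>2)
      = (\<Sum>j\<in>{..<n} - {i}. (hess_loss n d L x \<omega> i j \<theta>)\<^sup>2) + (\<Sum>s\<in>{n..<n+d}. (hess_loss n d L x \<omega> i s \<theta>)\<^sup>2)"
    using i by (subst sum.union_disjoint[symmetric]) (auto intro!: sum.cong)
  also have "\<dots> \<le> K\<^sup>2 * (real n * p) / 8 + K\<^sup>2 * (real n * p\<^sup>2) * (real d + 1) / 4"
    using sum_sq_hess_loss_items_le[OF i, of d L x \<omega> \<theta>] cov D Knp unfolding D_def by linarith
  also have "\<dots> \<le> K\<^sup>2 * (real n * p * (1 + real d * p))"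
  proof -
    have "K\<^sup>2 * (real n * p\<^sup>2) \<le> K\<^sup>2 * (real n * p)"
      using p n_pos by (intro mult_left_mono) (auto simp: power2_eq_square)
    moreover have "0 \<le> K\<^sup>2 * (real n * p)" "0 \<le> K\<^sup>2 * (real n * real d * p\<^sup>2)"
      using p by auto
    moreover have "K\<^sup>2 * (real n * p\<^sup>2) * (real d + 1) = K\<^sup>2 * (real n * p\<^sup>2) + K\<^sup>2 * (real n * real d * p\<^sup>2)"
      and "K\<^sup>2 * (real n * p * (1 + real d * p)) = K\<^sup>2 * (real n * p) + K\<^sup>2 * (real n * real d * p\<^sup>2)"
      by (simp_all add: algebra_simps power2_eq_square)
    ultimately show ?thesis by linarith
  qed
  finally show "(\<Sum>j\<in>{..<n+d} - {i}. (hess_loss n d L x \<omega> i j \<theta>)\<^sup>2) \<le> K\<^sup>2 * (real n * p * (1 + real d * p))" .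
qed

section \<open>Concentration for products of Bernoulli distributions\<close>

lemma prob_pair_pmf_le:
  assumes "\<And>a. a \<in> set_pmf A \<Longrightarrow> measure_pmf.prob B {b. (a, b) \<in> S} \<le> c"
  shows "measure_pmf.prob (pair_pmf A B) S \<le> c"
proof -
  obtain a0 where "a0 \<in> set_pmf A" using set_pmf_not_empty[of A] by blast
  then have "0 \<le> c" using assms measure_nonneg order_trans by blast
  have "emeasure (pair_pmf A B) S = (\<integral>\<^sup>+a. \<integral>\<^sup>+b. indicator S (a, b) \<partial>B \<partial>A)"
    by (simp add: nn_integral_pair_pmf'[symmetric])
  also have "\<dots> = (\<integral>\<^sup>+a. emeasure B {b. (a, b) \<in> S} \<partial>A)"
  proof (intro nn_integral_cong)
    fix a
    have "(\<lambda>b. indicator S (a, b) :: ennreal) = indicator {b. (a, b) \<in> S}"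
      by (auto simp: indicator_def)
    then show "(\<integral>\<^sup>+b. indicator S (a, b) \<partial>B) = emeasure B {b. (a, b) \<in> S}"
      by simp
  qed
  also have "\<dots> \<le> (\<integral>\<^sup>+a. ennreal c \<partial>A)"
    using assms by (intro nn_integral_mono_AE AE_pmfI) (simp add: measure_pmf.emeasure_eq_measure ennreal_leI)
  also have "\<dots> = ennreal c" by (simp add: measure_pmf.emeasure_space_1)
  finally show ?thesis using \<open>0 \<le> c\<close> by (simp add: measure_pmf.emeasure_eq_measure)
qed

lemma prob_pair_pmf_fst: "measure_pmf.prob (pair_pmf A B) {\<omega>. P (fst \<omega>)} = measure_pmf.prob A {a. P a}"
  using measure_map_pmf[of fst "pair_pmf A B" "{a. P a}"] by (simp add: map_fst_pair_pmf vimage_def)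

lemma prob_pair_pmf_snd: "measure_pmf.prob (pair_pmf A B) {\<omega>. P (snd \<omega>)} = measure_pmf.prob B {b. P b}"
  using measure_map_pmf[of snd "pair_pmf A B" "{b. P b}"] by (simp add: map_snd_pair_pmf vimage_def)

lemma expectation_Pi_pmf_bernoulli_component:
  assumes "finite I" "j \<in> I" "0 \<le> q j" "q j \<le> 1"
  shows "measure_pmf.expectation (Pi_pmf I dflt (\<lambda>j. bernoulli_pmf (q j))) (\<lambda>f. of_bool (f j)) = q j"
proof -
  have "measure_pmf.expectation (Pi_pmf I dflt (\<lambda>j. bernoulli_pmf (q j))) (\<lambda>f. of_bool (f j))
      = measure_pmf.expectation (map_pmf (\<lambda>f. f j) (Pi_pmf I dflt (\<lambda>j. bernoulli_pmf (q j)))) (of_bool :: bool \<Rightarrow> real)"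
    by (rule integral_map_pmf[symmetric])
  also have "\<dots> = q j"
    using assms by (simp add: Pi_pmf_component)
  finally show ?thesis .
qed

lemma prob_Pi_pmf_bernoulli_weighted_dev_ge:
  fixes w q :: "'a \<Rightarrow> real"
  assumes I: "finite I" and J: "J \<subseteq> I" and q: "\<And>j. j \<in> J \<Longrightarrow> 0 \<le> q j \<and> q j \<le> 1"
    and \<epsilon>: "\<epsilon> > 0" and V: "(\<Sum>j\<in>J. (w j)\<^sup>2) \<le> V"
  shows "measure_pmf.prob (Pi_pmf I dflt (\<lambda>j. bernoulli_pmf (q j)))
           {f. \<epsilon> \<le> \<bar>\<Sum>j\<in>J. w j * (of_bool (f j) - q j)\<bar>} \<le> 2 * exp (- 2 * \<epsilon>\<^sup>2 / V)"
proof (cases "(\<Sum>j\<in>J. (w j)\<^sup>2) = 0")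
  case True
  then have "\<forall>j\<in>J. w j = 0"
    using finite_subset[OF J I] by (simp add: sum_nonneg_eq_0_iff)
  then show ?thesis using \<epsilon> by simp
next
  case False
  define M where "M = Pi_pmf I dflt (\<lambda>j. bernoulli_pmf (q j))"
  define X where "X j f = w j * of_bool (f j)" for j and f :: "'a \<Rightarrow> bool"
  define a where "a j = min 0 (w j)" for j
  define b where "b j = max 0 (w j)" for j
  have J_fin: "finite J" using finite_subset[OF J I] .
  have "prob_space.indep_vars (measure_pmf M) (\<lambda>_. borel) X I"
    unfolding M_def X_def
    by (rule prob_space.indep_vars_compose2[OF measure_pmf.prob_space_axioms indep_vars_Pi_pmf[OF I]]) simp
  then have indep: "prob_space.indep_vars (measure_pmf M) (\<lambda>_. borel) X J"
    by (rule prob_space.indep_vars_subset[OF measure_pmf.prob_space_axioms _ J])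
  interpret Hoeffding_ineq "measure_pmf M" J X a b "\<Sum>j\<in>J. measure_pmf.expectation M (X j)"
    by unfold_locales (auto simp: J_fin indep X_def a_def b_def)
  have EX: "measure_pmf.expectation M (X j) = w j * q j" if "j \<in> J" for j
    using that J q unfolding M_def X_def
    by (auto simp: expectation_Pi_pmf_bernoulli_component[OF I])
  have dev: "(\<Sum>j\<in>J. X j f) - (\<Sum>j\<in>J. measure_pmf.expectation M (X j)) = (\<Sum>j\<in>J. w j * (of_bool (f j) - q j))" for f
    by (simp add: EX X_def sum_subtractf[symmetric] right_diff_distrib)
  have ab: "(\<Sum>j\<in>J. (b j - a j)\<^sup>2) = (\<Sum>j\<in>J. (w j)\<^sup>2)"
    by (intro sum.cong refl) (simp add: a_def b_def max_def min_def)
  have pos: "(\<Sum>j\<in>J. (w j)\<^sup>2) > 0"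
    using False by (simp add: order_neq_le_trans sum_nonneg)
  have "measure_pmf.prob M {f. \<epsilon> \<le> \<bar>\<Sum>j\<in>J. w j * (of_bool (f j) - q j)\<bar>}
      \<le> 2 * exp (- 2 * \<epsilon>\<^sup>2 / (\<Sum>j\<in>J. (w j)\<^sup>2))"
    using Hoeffding_ineq_abs_ge[of \<epsilon>] \<epsilon> pos by (simp add: dev ab)
  also have "\<dots> \<le> 2 * exp (- 2 * \<epsilon>\<^sup>2 / V)"
    using pos V \<epsilon> by (simp add: frac_le)
  finally show ?thesis unfolding M_def .
qed

lemma prob_Pi_pmf_bernoulli_count_ge:
  fixes p t :: real
  assumes I: "finite I" and A: "A \<subseteq> I" and p: "0 \<le> p" "p \<le> 1"
  shows "measure_pmf.prob (Pi_pmf I False (\<lambda>_. bernoulli_pmf p)) {f. t \<le> (\<Sum>j\<in>A. of_bool (f j))}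
           \<le> exp (2 * p * card A - t)"
proof -
  define M where "M = Pi_pmf I False (\<lambda>_. bernoulli_pmf p)"
  define g :: "'a \<Rightarrow> bool \<Rightarrow> real" where "g j v = exp (of_bool (j \<in> A \<and> v))" for j v
  have exp_count: "exp (\<Sum>j\<in>A. of_bool (f j)) = (\<Prod>j\<in>I. g j (f j))" for f :: "'a \<Rightarrow> bool"
  proof -
    have "(\<Sum>j\<in>A. of_bool (f j)) = (\<Sum>j\<in>I. of_bool (j \<in> A \<and> f j) :: real)"
      using A I by (simp add: sum.inter_filter[symmetric] Int_absorb1 of_bool_conj Collect_conj_eq)
    then show ?thesis unfolding g_def by (simp only: exp_sum[OF I])
  qed
  have fin_bern: "finite (set_pmf (bernoulli_pmf p))" by (rule finite_subset[OF subset_UNIV]) simp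
  have g_bound: "measure_pmf.expectation (bernoulli_pmf p) (g j) \<le> exp (2 * p * of_bool (j \<in> A))" for j
  proof (cases "j \<in> A")
    case True
    have "measure_pmf.expectation (bernoulli_pmf p) (g j) = exp 1 * p + (1 - p)"
      using p True by (simp add: g_def)
    also have "\<dots> \<le> 1 + 2 * p" using mult_right_mono[OF exp_le p(1)] by linarith
    also have "\<dots> \<le> exp (2 * p)" by (rule exp_ge_add_one_self)
    finally show ?thesis using True by simp
  qed (use p in \<open>simp add: g_def\<close>)
  have "measure_pmf.expectation M (\<lambda>f. exp (\<Sum>j\<in>A. of_bool (f j)))
      = (\<Prod>j\<in>I. measure_pmf.expectation (bernoulli_pmf p) (g j))"
    unfolding exp_count M_def
    by (rule expectation_prod_Pi_pmf[OF I]) (auto intro: integrable_measure_pmf_finite[OF fin_bern] simp: g_def)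
  also have "\<dots> \<le> (\<Prod>j\<in>I. exp (2 * p * of_bool (j \<in> A)))"
    by (intro prod_mono conjI g_bound) (simp add: g_def)
  also have "\<dots> = exp (2 * p * card A)"
    using A I by (simp add: exp_sum[symmetric] sum_distrib_left[symmetric] Int_absorb1 sum.If_cases)
  finally have E: "measure_pmf.expectation M (\<lambda>f. exp (\<Sum>j\<in>A. of_bool (f j))) \<le> exp (2 * p * card A)" .
  have int: "integrable (measure_pmf M) (\<lambda>f. exp (\<Sum>j\<in>A. of_bool (f j) :: real))"
    unfolding exp_count M_def
    by (rule integrable_prod_Pi_pmf[OF I]) (rule integrable_measure_pmf_finite[OF fin_bern])
  have "measure_pmf.prob M {f. t \<le> (\<Sum>j\<in>A. of_bool (f j))}
      = measure_pmf.prob M {f \<in> space (measure_pmf M). exp t \<le> exp (\<Sum>j\<in>A. of_bool (f j))}"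
    by simp
  also have "\<dots> \<le> measure_pmf.expectation M (\<lambda>f. exp (\<Sum>j\<in>A. of_bool (f j))) / exp t"
    by (rule integral_Markov_inequality_measure[OF int, where A = UNIV]) auto
  also have "\<dots> \<le> exp (2 * p * card A) / exp t"
    by (rule divide_right_mono[OF E]) simp
  finally show ?thesis unfolding M_def by (simp add: exp_diff)
qed

text \<open>For the pair e = (i, j) with j < i this is L (y_ji - E y_ji).\<close>

definition count_dev ::
  "nat \<Rightarrow> nat \<Rightarrow> nat \<Rightarrow> (nat \<Rightarrow> nat \<Rightarrow> real) \<Rightarrow> (nat \<Rightarrow> real) \<Rightarrow> ((nat \<times> nat) \<times> nat \<Rightarrow> bool) \<Rightarrow> nat \<times> nat \<Rightarrow> real"
  where "count_dev n d L x \<theta> y e = (\<Sum>l<L. of_bool (y (e, l)) - logistic (score_gap n d x \<theta> e))"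

lemma outcome_pmf_eq_Pi_pmf:
  "outcome_pmf n d L x \<theta>
     = Pi_pmf (pairs n \<times> {..<L}) False (\<lambda>k. bernoulli_pmf (logistic (score_gap n d x \<theta> (fst k))))"
  unfolding outcome_pmf_def score_gap_def by (simp add: case_prod_unfold)

lemma prob_weighted_count_dev_ge:
  assumes S: "S \<subseteq> pairs n" and \<epsilon>: "\<epsilon> > 0" and V: "real L * (\<Sum>e\<in>S. (\<sigma> e)\<^sup>2) \<le> V"
  shows "measure_pmf.prob (outcome_pmf n d L x \<theta>)
           {y. \<epsilon> \<le> \<bar>\<Sum>e\<in>S. \<sigma> e * count_dev n d L x \<theta> y e\<bar>} \<le> 2 * exp (- 2 * \<epsilon>\<^sup>2 / V)"
proof -
  let ?q = "\<lambda>k. logistic (score_gap n d x \<theta> (fst k))"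
  have "finite S" using finite_subset[OF S finite_pairs] .
  then have sum_eq: "(\<Sum>e\<in>S. \<sigma> e * count_dev n d L x \<theta> y e)
      = (\<Sum>k\<in>S \<times> {..<L}. \<sigma> (fst k) * (of_bool (y k) - ?q k))" for y
    unfolding count_dev_def sum_distrib_left by (simp add: sum.cartesian_product')
  have "(\<Sum>k\<in>S \<times> {..<L}. (\<sigma> (fst k))\<^sup>2) = real L * (\<Sum>e\<in>S. (\<sigma> e)\<^sup>2)"
    by (simp add: sum.cartesian_product' sum_distrib_left)
  then show ?thesis
    unfolding outcome_pmf_eq_Pi_pmf sum_eq using S \<epsilon> V
    by (intro prob_Pi_pmf_bernoulli_weighted_dev_ge)
       (auto simp: finite_pairs logistic_nonneg logistic_le_one)
qed

lemma graph_degree_eq_sum_incident: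
  "graph_degree n G i = (\<Sum>e\<in>{e \<in> pairs n. fst e = i \<or> snd e = i}. of_bool (G e))"
  unfolding graph_degree_def edges_def sum.inter_filter[OF finite_pairs] by (intro sum.cong) auto

lemma card_incident_pairs_le: "card {e \<in> pairs n. fst e = i \<or> snd e = i} \<le> 2 * n"
proof -
  have "{e \<in> pairs n. fst e = i \<or> snd e = i} \<subseteq> {i} \<times> {..<n} \<union> {..<n} \<times> {i}"
    by (auto simp: pairs_def)
  then have "card {e \<in> pairs n. fst e = i \<or> snd e = i} \<le> card ({i} \<times> {..<n} \<union> {..<n} \<times> {i})"
    by (intro card_mono) auto
  also have "\<dots> \<le> 2 * n"
    using card_Un_le[of "{i} \<times> {..<n}" "{..<n} \<times> {i}"] by (simp add: card_cartesian_product)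
  finally show ?thesis .
qed

lemma prob_graph_degree_ge:
  assumes "0 \<le> p" "p \<le> 1"
  shows "measure_pmf.prob (graph_pmf n p) {G. t \<le> graph_degree n G i} \<le> exp (4 * p * real n - t)"
proof -
  have "measure_pmf.prob (graph_pmf n p) {G. t \<le> graph_degree n G i}
      \<le> exp (2 * p * card {e \<in> pairs n. fst e = i \<or> snd e = i} - t)"
    unfolding graph_pmf_def graph_degree_eq_sum_incident
    by (rule prob_Pi_pmf_bernoulli_count_ge[OF finite_pairs _ assms]) auto
  also have "\<dots> \<le> exp (4 * p * real n - t)"
  proof -
    have "real (card {e \<in> pairs n. fst e = i \<or> snd e = i}) \<le> real (2 * n)"
      using card_incident_pairs_le by (rule of_nat_mono)
    then have "p * real (card {e \<in> pairs n. fst e = i \<or> snd e = i}) \<le> p * real (2 * n)"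
      using assms(1) by (rule mult_left_mono)
    then show ?thesis by simp
  qed
  finally show ?thesis .
qed

lemma count_dev_eq:
  "count_dev n d L x \<theta> y e = (\<Sum>l<L. of_bool (y (e, l))) - real L * logistic (score_gap n d x \<theta> e)"
  by (simp add: count_dev_def sum_subtractf)

lemma integrable_count:
  "integrable (measure_pmf M) (\<lambda>y. \<Sum>l<L. of_bool (y (e, l)) :: real)"
  by (rule Bochner_Integration.integrable_sum, rule measure_pmf.integrable_const_bound[where B = 1]) auto

lemma expectation_count:
  assumes "e \<in> pairs n"
  shows "measure_pmf.expectation (outcome_pmf n d L x \<theta>) (\<lambda>y. \<Sum>l<L. of_bool (y (e, l)))
           = real L * logistic (score_gap n d x \<theta> e)"
proof -
  have "measure_pmf.expectation (outcome_pmf n d L x \<theta>) (\<lambda>y. \<Sum>l<L. of_bool (y (e, l)) :: real)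
      = (\<Sum>l<L. measure_pmf.expectation (outcome_pmf n d L x \<theta>) (\<lambda>y. of_bool (y (e, l))))"
    by (rule Bochner_Integration.integral_sum, rule measure_pmf.integrable_const_bound[where B = 1]) auto
  also have "\<dots> = (\<Sum>l<L. logistic (score_gap n d x \<theta> e))"
    unfolding outcome_pmf_eq_Pi_pmf using assms
    by (intro sum.cong refl, subst expectation_Pi_pmf_bernoulli_component)
       (auto simp: finite_pairs logistic_nonneg logistic_le_one)
  finally show ?thesis by simp
qed

lemma abs_ybar_dev_eq:
  assumes ab: "a < n" "b < n" "a \<noteq> b" and L: "L \<ge> 1"
  shows "\<bar>ybar L \<omega> b a - measure_pmf.expectation (model_pmf n d p L x \<theta>) (\<lambda>\<omega>'. ybar L \<omega>' b a)\<bar>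
           = \<bar>count_dev n d L x \<theta> (snd \<omega>) (max a b, min a b)\<bar> / real L"
proof -
  define e where "e = (max a b, min a b)"
  define C where "C y = (\<Sum>l<L. of_bool (y (e, l)) :: real)" for y
  define q where "q = logistic (score_gap n d x \<theta> e)"
  have e: "e \<in> pairs n" using ab by (auto simp: e_def pairs_def)
  have L_pos: "real L > 0" using L by simp
  have EC: "measure_pmf.expectation (outcome_pmf n d L x \<theta>) C = real L * q"
    unfolding C_def q_def by (rule expectation_count[OF e])
  have ybar_eq: "ybar L \<omega>' b a = (if b < a then C (snd \<omega>') / real L else 1 - C (snd \<omega>') / real L)" for \<omega>'
    using ab by (auto simp: ybar_def C_def e_def max_def min_def)
  have "integrable (measure_pmf (outcome_pmf n d L x \<theta>)) C"
    unfolding C_def by (rule integrable_count)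
  then have "measure_pmf.expectation (outcome_pmf n d L x \<theta>) (\<lambda>y. 1 - C y / real L) = 1 - q"
    using EC L_pos by (subst Bochner_Integration.integral_diff) auto
  moreover have "measure_pmf.expectation (outcome_pmf n d L x \<theta>) (\<lambda>y. C y / real L) = q"
    using EC L_pos by simp
  ultimately have "measure_pmf.expectation (model_pmf n d p L x \<theta>) (\<lambda>\<omega>'. ybar L \<omega>' b a)
      = (if b < a then q else 1 - q)"
    unfolding ybar_eq model_pmf_def
    by (cases "b < a") (simp_all only: if_True if_False expectation_pair_pmf_snd[where f = "\<lambda>y. C y / real L"]
        expectation_pair_pmf_snd[where f = "\<lambda>y. 1 - C y / real L"])
  moreover have "\<bar>C (snd \<omega>) / real L - q\<bar> = \<bar>C (snd \<omega>) - real L * q\<bar> / real L"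
    using L_pos by (simp add: abs_divide[symmetric] field_simps)
  ultimately show ?thesis
    unfolding count_dev_eq ybar_eq e_def[symmetric] C_def[symmetric] q_def[symmetric]
    by (auto simp: abs_minus_commute)
qed

lemma grad_loss_eq_count_dev:
  assumes "L \<ge> 1"
  shows "grad_loss n d L x \<omega> k \<theta>
           = - (\<Sum>e\<in>edges n (fst \<omega>). edge_coeff n d x e k * count_dev n d L x \<theta> (snd \<omega>) e) / real L"
  unfolding grad_loss_eq sum_divide_distrib sum_negf[symmetric]
proof (rule sum.cong[OF refl])
  fix e assume "e \<in> edges n (fst \<omega>)"
  then have "ybar L \<omega> (snd e) (fst e) = (\<Sum>l<L. of_bool (snd \<omega> (e, l))) / real L"
    by (auto simp: ybar_def edges_def pairs_def)
  then show "edge_coeff n d x e k * (logistic (score_gap n d x \<theta> e) - ybar L \<omega> (snd e) (fst e))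
      = - (edge_coeff n d x e k * count_dev n d L x \<theta> (snd \<omega>) e) / real L"
    using assms by (simp add: count_dev_eq field_simps)
qed

section \<open>The bad events\<close>

lemma exp_minus_mult_ln: "0 < y \<Longrightarrow> exp (- (real k * ln y)) = 1 / y ^ k"
  by (simp add: exp_minus exp_of_nat_mult inverse_eq_divide)

lemma prob_ge_one_minus_bad_events:
  assumes "\<And>\<omega>. \<omega> \<notin> A \<Longrightarrow> \<omega> \<in> B\<^sub>1 \<or> \<omega> \<in> B\<^sub>2 \<or> \<omega> \<in> B\<^sub>3"
  shows "1 - (measure_pmf.prob M B\<^sub>1 + measure_pmf.prob M B\<^sub>2 + measure_pmf.prob M B\<^sub>3) \<le> measure_pmf.prob M A"
proof -
  have "1 - measure_pmf.prob M A = measure_pmf.prob M (- A)"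
    using measure_pmf.prob_compl[of A M] by (simp add: Compl_eq_Diff_UNIV)
  also have "\<dots> \<le> measure_pmf.prob M (B\<^sub>1 \<union> B\<^sub>2 \<union> B\<^sub>3)"
    using assms by (intro measure_pmf.finite_measure_mono) auto
  also have "\<dots> \<le> measure_pmf.prob M B\<^sub>1 + measure_pmf.prob M B\<^sub>2 + measure_pmf.prob M B\<^sub>3"
    using measure_Un_le[of "B\<^sub>1 \<union> B\<^sub>2" M B\<^sub>3] measure_Un_le[of B\<^sub>1 M B\<^sub>2] by simp
  finally show ?thesis by linarith
qed

lemma power2_mult_sqrt_div:
  fixes a C L :: real
  assumes "0 \<le> a" "0 < L"
  shows "(L * (C * sqrt (a / L)))\<^sup>2 = C\<^sup>2 * a * L"
  unfolding power_mult_distrib real_sqrt_pow2[OF divide_nonneg_pos[OF assms]]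
  using assms by (simp add: power2_eq_square)

lemma prob_graph_degree_large:
  assumes cp: "cp > 0" and p: "0 \<le> p" "p \<le> 1" and pn: "p * real n > cp * ln (real n)" and n: "n > 0"
  shows "measure_pmf.prob (model_pmf n d p L x \<theta>) {\<omega>. (4 + 10 / cp) * real n * p \<le> graph_degree n (fst \<omega>) i}
           \<le> 1 / real n ^ 10"
proof -
  have "measure_pmf.prob (model_pmf n d p L x \<theta>) {\<omega>. (4 + 10 / cp) * real n * p \<le> graph_degree n (fst \<omega>) i}
      = measure_pmf.prob (graph_pmf n p) {G. (4 + 10 / cp) * real n * p \<le> graph_degree n G i}"
    unfolding model_pmf_def by (rule prob_pair_pmf_fst)
  also have "\<dots> \<le> exp (4 * p * real n - (4 + 10 / cp) * real n * p)"
    by (rule prob_graph_degree_ge[OF p])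
  also have "\<dots> \<le> exp (- (real 10 * ln (real n)))"
  proof (rule exp_mono)
    have "4 * p * real n - (4 + 10 / cp) * real n * p = - (10 / cp * (p * real n))"
      by (simp add: algebra_simps)
    also have "\<dots> \<le> - (10 / cp * (cp * ln (real n)))"
      using pn cp by (intro le_imp_neg_le mult_left_mono) auto
    finally show "4 * p * real n - (4 + 10 / cp) * real n * p \<le> - (real 10 * ln (real n))"
      using cp by simp
  qed
  also have "\<dots> = 1 / real n ^ 10"
    using n by (intro exp_minus_mult_ln) simp
  finally show ?thesis .
qed

lemma prob_count_dev_large:
  assumes n: "n \<ge> 2" and L: "L \<ge> 1" and C: "C > 0" "6 \<le> C\<^sup>2"
  shows "measure_pmf.prob (model_pmf n d p L x \<theta>)
           (\<Union>e\<in>pairs n. {\<omega>. C * sqrt (ln (real n) / real L) \<le> \<bar>count_dev n d L x \<theta> (snd \<omega>) e\<bar> / real L})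
           \<le> 2 / real n ^ 10"
proof -
  define \<epsilon> where "\<epsilon> = real L * (C * sqrt (ln (real n) / real L))"
  have ln_pos: "ln (real n) > 0" and L_pos: "real L > 0" using n L by auto
  have \<epsilon>_pos: "\<epsilon> > 0" unfolding \<epsilon>_def using ln_pos L_pos C by simp
  have single: "measure_pmf.prob (model_pmf n d p L x \<theta>)
      {\<omega>. C * sqrt (ln (real n) / real L) \<le> \<bar>count_dev n d L x \<theta> (snd \<omega>) e\<bar> / real L} \<le> 2 / real n ^ 12"
    if e: "e \<in> pairs n" for e
  proof -
    have "measure_pmf.prob (model_pmf n d p L x \<theta>)
        {\<omega>. C * sqrt (ln (real n) / real L) \<le> \<bar>count_dev n d L x \<theta> (snd \<omega>) e\<bar> / real L}
      = measure_pmf.prob (outcome_pmf n d L x \<theta>) {y. \<epsilon> \<le> \<bar>\<Sum>e'\<in>{e}. 1 * count_dev n d L x \<theta> y e'\<bar>}"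
      unfolding model_pmf_def \<epsilon>_def using L_pos
      by (subst prob_pair_pmf_snd[where P = "\<lambda>y. C * sqrt (ln (real n) / real L) \<le> \<bar>count_dev n d L x \<theta> y e\<bar> / real L"])
         (simp add: field_simps)
    also have "\<dots> \<le> 2 * exp (- 2 * \<epsilon>\<^sup>2 / real L)"
      using e \<epsilon>_pos by (intro prob_weighted_count_dev_ge) auto
    also have "- 2 * \<epsilon>\<^sup>2 / real L = - (2 * C\<^sup>2 * ln (real n))"
      unfolding \<epsilon>_def using ln_pos L_pos by (simp add: power2_mult_sqrt_div)
    also have "2 * exp (- (2 * C\<^sup>2 * ln (real n))) \<le> 2 * exp (- (real 12 * ln (real n)))"
      using C ln_pos by simp
    also have "\<dots> = 2 / real n ^ 12"
      using n exp_minus_mult_ln[of "real n" 12] by simp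
    finally show ?thesis .
  qed
  have "measure_pmf.prob (model_pmf n d p L x \<theta>)
      (\<Union>e\<in>pairs n. {\<omega>. C * sqrt (ln (real n) / real L) \<le> \<bar>count_dev n d L x \<theta> (snd \<omega>) e\<bar> / real L})
      \<le> (\<Sum>e\<in>pairs n. 2 / real n ^ 12)"
    using single by (intro measure_pmf.finite_measure_subadditive_finite[THEN order_trans] sum_mono)
       (auto simp: finite_pairs)
  also have "\<dots> = real (card (pairs n)) * (2 / real n ^ 12)"
    by simp
  also have "\<dots> \<le> real n ^ 2 * (2 / real n ^ 12)"
  proof (rule mult_right_mono)
    show "real (card (pairs n)) \<le> real n ^ 2"
      using card_pairs_le[of n] by (metis of_nat_le_iff of_nat_power)
  qed simp
  also have "\<dots> = 2 / real n ^ 10"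
    using n by (simp add: field_simps power_add[symmetric])
  finally show ?thesis .
qed

lemma prob_grad_large:
  assumes i: "i < n" and n: "n \<ge> 2" and L: "L \<ge> 1" and p: "p > 0" and K: "K > 0"
    and C: "C > 0" "5 * K \<le> C\<^sup>2"
  shows "measure_pmf.prob (model_pmf n d p L x \<theta>)
     {\<omega>. graph_degree n (fst \<omega>) i < K * real n * p \<and>
         C * sqrt (real n * p * ln (real n) / real L)
           \<le> \<bar>\<Sum>e\<in>edges n (fst \<omega>). edge_coeff n d x e i * count_dev n d L x \<theta> (snd \<omega>) e\<bar> / real L}
     \<le> 2 / real n ^ 10"
  unfolding model_pmf_def
proof (rule prob_pair_pmf_le)
  fix G
  define \<epsilon> where "\<epsilon> = real L * (C * sqrt (real n * p * ln (real n) / real L))"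
  have ln_pos: "ln (real n) > 0" and L_pos: "real L > 0" using n L by auto
  have \<epsilon>_pos: "\<epsilon> > 0" unfolding \<epsilon>_def using ln_pos L_pos C p n by simp
  show "measure_pmf.prob (outcome_pmf n d L x \<theta>) {y. (G, y) \<in> {\<omega>. graph_degree n (fst \<omega>) i < K * real n * p \<and>
         C * sqrt (real n * p * ln (real n) / real L)
           \<le> \<bar>\<Sum>e\<in>edges n (fst \<omega>). edge_coeff n d x e i * count_dev n d L x \<theta> (snd \<omega>) e\<bar> / real L}}
     \<le> 2 / real n ^ 10"
  proof (cases "graph_degree n G i < K * real n * p")
    case True
    have "real L * (\<Sum>e\<in>edges n G. (edge_coeff n d x e i)\<^sup>2) \<le> real L * (K * real n * p)"
      using True L_pos by (simp add: graph_degree_eq_sum_sq_edge_coeff[OF i, symmetric])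
    then have "measure_pmf.prob (outcome_pmf n d L x \<theta>)
        {y. \<epsilon> \<le> \<bar>\<Sum>e\<in>edges n G. edge_coeff n d x e i * count_dev n d L x \<theta> y e\<bar>}
        \<le> 2 * exp (- 2 * \<epsilon>\<^sup>2 / (real L * (K * real n * p)))"
      using \<epsilon>_pos by (intro prob_weighted_count_dev_ge edges_subset_pairs)
    also have "- 2 * \<epsilon>\<^sup>2 / (real L * (K * real n * p)) = - (2 * C\<^sup>2 / K * ln (real n))"
      unfolding \<epsilon>_def using ln_pos L_pos p n K by (simp add: power2_mult_sqrt_div)
    also have "2 * exp (- (2 * C\<^sup>2 / K * ln (real n))) \<le> 2 * exp (- (real 10 * ln (real n)))"
      using C K ln_pos by (simp add: field_simps)
    also have "\<dots> = 2 / real n ^ 10"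
      using n exp_minus_mult_ln[of "real n" 10] by simp
    finally have "measure_pmf.prob (outcome_pmf n d L x \<theta>)
        {y. \<epsilon> \<le> \<bar>\<Sum>e\<in>edges n G. edge_coeff n d x e i * count_dev n d L x \<theta> y e\<bar>} \<le> 2 / real n ^ 10" .
    then show ?thesis
      unfolding \<epsilon>_def using L_pos
      by (elim order_trans[rotated], intro measure_pmf.finite_measure_mono) (auto simp: field_simps)
  qed simp
qed

lemma five_mult_le_power4:
  fixes K :: real
  assumes "4 \<le> K"
  shows "5 * K \<le> (K\<^sup>2)\<^sup>2"
proof -
  have "4 ^ 3 \<le> K ^ 3" using assms by (intro power_mono) auto
  then have "K * 5 \<le> K * K ^ 3" using assms by (intro mult_left_mono) auto
  then show ?thesis by (simp add: eval_nat_numeral mult_ac)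
qed

lemma prob_local_bounds_ge:
  assumes cp: "cp > 0" and C: "C = (4 + 10 / cp)\<^sup>2" and n: "2 \<le> n" and p: "0 \<le> p" "p \<le> 1"
    and L: "1 \<le> L" and pn: "p * real n > cp * ln (real n)"
    and x: "\<forall>i<n. sqrt (\<Sum>m<d. (x i m)\<^sup>2) \<le> sqrt ((real d + 1) / real n)" and i: "i < n"
  shows "1 - 5 / real n ^ 10 \<le> measure_pmf.prob (model_pmf n d p L x \<theta>)
          {\<omega>. \<bar>grad_loss n d L x \<omega> i \<theta>\<bar> \<le> C * sqrt (real n * p * ln (real n) / real L)
             \<and> (\<Sum>j\<in>{..<n+d} - {i}. (hess_loss n d L x \<omega> i j \<theta>)\<^sup>2) \<le> C * (real n * p * (1 + real d * p))
             \<and> (\<Sum>s\<in>{n..<n+d}. (hess_loss n d L x \<omega> i s \<theta>)\<^sup>2) \<le> C * (real n * real d * p\<^sup>2)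
             \<and> (\<Sum>j\<in>{..<n} - {i}. \<bar>hess_loss n d L x \<omega> i j \<theta>\<bar>) \<le> C * (real n * p)
             \<and> (\<forall>a<n. \<forall>b<n. a \<noteq> b \<longrightarrow> edge \<omega> a b \<longrightarrow>
                  \<bar>ybar L \<omega> b a - measure_pmf.expectation (model_pmf n d p L x \<theta>) (\<lambda>\<omega>'. ybar L \<omega>' b a)\<bar>
                    \<le> C * sqrt (ln (real n) / real L))}"
    (is "_ \<le> measure_pmf.prob ?M ?Good")
proof -
  \<comment> \<open>K makes the Chernoff bound for the degree of i equal to n^-10; C = K^2 absorbs all other constants.\<close>
  define K where "K = 4 + 10 / cp"
  have K: "4 \<le> K" and C_K: "C = K\<^sup>2" using cp C by (simp_all add: K_def)
  have C_pos: "C > 0" and C_sq: "5 * K \<le> C\<^sup>2" "6 \<le> C\<^sup>2"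
    using K five_mult_le_power4[OF K] by (simp_all add: C_K)
  have ln_pos: "ln (real n) > 0" using n by simp
  have "0 < p * real n" using pn mult_pos_pos[OF cp ln_pos] by linarith
  then have p_pos: "p > 0" by (simp add: zero_less_mult_iff)
  have x': "\<forall>a<n. (\<Sum>m<d. (x a m)\<^sup>2) \<le> (real d + 1) / real n" using x by simp
  define gs where "gs \<omega> = (\<Sum>e\<in>edges n (fst \<omega>). edge_coeff n d x e i * count_dev n d L x \<theta> (snd \<omega>) e)" for \<omega>
  define B\<^sub>1 :: "sample set" where "B\<^sub>1 = {\<omega>. K * real n * p \<le> graph_degree n (fst \<omega>) i}"
  define B\<^sub>2 :: "sample set" where "B\<^sub>2 = (\<Union>e\<in>pairs n. {\<omega>. C * sqrt (ln (real n) / real L) \<le> \<bar>count_dev n d L x \<theta> (snd \<omega>) e\<bar> / real L})"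
  define B\<^sub>3 :: "sample set" where "B\<^sub>3 = {\<omega>. graph_degree n (fst \<omega>) i < K * real n * p \<and>
                             C * sqrt (real n * p * ln (real n) / real L) \<le> \<bar>gs \<omega>\<bar> / real L}"
  have "measure_pmf.prob ?M B\<^sub>1 \<le> 1 / real n ^ 10"
    unfolding B\<^sub>1_def K_def using cp p pn n by (intro prob_graph_degree_large) auto
  moreover have "measure_pmf.prob ?M B\<^sub>2 \<le> 2 / real n ^ 10"
    unfolding B\<^sub>2_def using n L C_pos C_sq by (intro prob_count_dev_large) auto
  moreover have "measure_pmf.prob ?M B\<^sub>3 \<le> 2 / real n ^ 10"
    unfolding B\<^sub>3_def gs_def using i n L p_pos K C_pos C_sq by (intro prob_grad_large) auto
  moreover have "\<omega> \<in> ?Good" if "\<omega> \<notin> B\<^sub>1" "\<omega> \<notin> B\<^sub>2" "\<omega> \<notin> B\<^sub>3" for \<omega>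
  proof -
    have deg: "graph_degree n (fst \<omega>) i < K * real n * p" using that(1) by (simp add: B\<^sub>1_def)
    note hess = hess_loss_bounds[OF i x' deg _ p_pos p(2), unfolded C_K[symmetric]]
    have "\<bar>grad_loss n d L x \<omega> i \<theta>\<bar> = \<bar>gs \<omega>\<bar> / real L"
      unfolding grad_loss_eq_count_dev[OF L] gs_def by simp
    also have "\<dots> \<le> C * sqrt (real n * p * ln (real n) / real L)"
      using that(3) deg by (simp add: B\<^sub>3_def)
    finally have grad: "\<bar>grad_loss n d L x \<omega> i \<theta>\<bar> \<le> C * sqrt (real n * p * ln (real n) / real L)" .
    have ybar: "\<bar>ybar L \<omega> b a - measure_pmf.expectation ?M (\<lambda>\<omega>'. ybar L \<omega>' b a)\<bar> \<le> C * sqrt (ln (real n) / real L)"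
      if "a < n" "b < n" "a \<noteq> b" for a b
    proof -
      have "(max a b, min a b) \<in> pairs n" using that by (auto simp: pairs_def)
      then show ?thesis
        using \<open>\<omega> \<notin> B\<^sub>2\<close> unfolding abs_ybar_dev_eq[OF that L] B\<^sub>2_def by auto
    qed
    show ?thesis using grad hess ybar K by auto
  qed
  then have "1 - (measure_pmf.prob ?M B\<^sub>1 + measure_pmf.prob ?M B\<^sub>2 + measure_pmf.prob ?M B\<^sub>3)
      \<le> measure_pmf.prob ?M ?Good"
    by (intro prob_ge_one_minus_bad_events) blast
  ultimately show ?thesis by (simp add: field_simps)
qed

theorem lemma21:
  shows "\<forall>c\<^sub>p>0. \<forall>c\<^sub>L>0. \<exists>C C\<^sub>0 :: real. \<exists>N :: nat.
    \<forall>n d p L x \<theta>.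
      n \<ge> N \<longrightarrow> d < n \<longrightarrow> 0 \<le> p \<longrightarrow> p \<le> 1 \<longrightarrow> L \<ge> 1 \<longrightarrow>
      p * real n > c\<^sub>p * ln (real n) \<longrightarrow>
      real n * p * real L \<ge> c\<^sub>L * ln (real n) \<longrightarrow>
      (\<forall>i<n. sqrt (\<Sum>m<d. (x i m)\<^sup>2) \<le> sqrt ((real d + 1) / real n)) \<longrightarrow>
      (\<forall>i<n.
        measure_pmf.prob (model_pmf n d p L x \<theta>)
          {\<omega>. \<bar>grad_loss n d L x \<omega> i \<theta>\<bar> \<le> C * sqrt (real n * p * ln (real n) / real L)
             \<and> (\<Sum>j\<in>{..<n+d} - {i}. (hess_loss n d L x \<omega> i j \<theta>)\<^sup>2) \<le> C * (real n * p * (1 + real d * p))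
             \<and> (\<Sum>s\<in>{n..<n+d}. (hess_loss n d L x \<omega> i s \<theta>)\<^sup>2) \<le> C * (real n * real d * p\<^sup>2)
             \<and> (\<Sum>j\<in>{..<n} - {i}. \<bar>hess_loss n d L x \<omega> i j \<theta>\<bar>) \<le> C * (real n * p)
             \<and> (\<forall>a<n. \<forall>b<n. a \<noteq> b \<longrightarrow> edge \<omega> a b \<longrightarrow>
                  \<bar>ybar L \<omega> b a - measure_pmf.expectation (model_pmf n d p L x \<theta>) (\<lambda>\<omega>'. ybar L \<omega>' b a)\<bar>
                    \<le> C * sqrt (ln (real n) / real L))}
        \<ge> 1 - C\<^sub>0 / real n ^ 10)"
  apply (intro allI impI)
  subgoal for c\<^sub>p
    by (rule exI[of _ "(4 + 10 / c\<^sub>p)\<^sup>2"], rule exI[of _ 5], rule exI[of _ 2])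
       (auto intro!: prob_local_bounds_ge)
  done

end
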